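(* Let $D\subset\mathbb R^N$ be open and convex and $w:D\to\mathbb R$ convex. Suppose that for some $x_0\in D$, $$w(x)=w(x_0)+\langle p_0,x-x_0\rangle+\tfrac12\langle A(x-x_0),x-x_0\rangle+o(\|x-x_0\|^2)$$ for some $p_0\in\mathbb R^N$ and a symmetric $N\times N$ matrix $A$. Let $f$ be a continuously differentiable real function on a neighbourhood of $p_0$. Then $$\lim_{x\to x_0}\ \sup_{p\in\partial w(x)}\frac{|f(p)-f(p_0)-\langle\nabla f(p_0),A(x-x_0)\rangle|}{\|x-x_0\|}=0,$$ where $\partial w(x)$ is the subdifferential of $w$ at $x$. *)

theory Defs
  imports "HOL-Analysis.Analysis"
begin

definition subdifferential :: "'a::real_inner set \<Rightarrow> ('a \<Rightarrow> real) \<Rightarrow> 'a \<Rightarrow> 'a set" where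
  "subdifferential D w x = {p. \<forall>y\<in>D. w y \<ge> w x + inner p (y - x)}"

end

theory Submission
  imports Defs
begin

text \<open>
  Write \<open>w = Q + R\<close> with \<open>Q\<close> the quadratic model at \<open>x\<^sub>0\<close> and \<open>R = o(\<parallel>x - x\<^sub>0\<parallel>\<^sup>2)\<close>.
  If \<open>p\<close> is a subgradient at \<open>x = x\<^sub>0 + h\<close>, testing the subgradient inequality at
  \<open>x + s z\<close> with \<open>s = t \<parallel>h\<parallel>\<close> and \<open>z\<close> the unit vector along \<open>v = p - p\<^sub>0 - A h\<close> gives
  \<open>s \<parallel>v\<parallel> \<le> s\<^sup>2 \<parallel>A\<parallel> / 2 + R(x + s z) - R(x)\<close>, hence \<open>\<parallel>v\<parallel> \<le> (t \<parallel>A\<parallel> / 2 + o(1) / t) \<parallel>h\<parallel>\<close>;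
  letting first \<open>t\<close> and then \<open>\<parallel>h\<parallel>\<close> go to \<open>0\<close> shows \<open>p = p\<^sub>0 + A h + o(\<parallel>h\<parallel>)\<close> uniformly
  in \<open>p\<close>. Composing with the first-order expansion of \<open>f\<close> at \<open>p\<^sub>0\<close> gives the claim.
\<close>

lemma inner_matrix_vector_mul_symmetric:
  fixes A :: "real ^ 'n ^ 'n"
  assumes "transpose A = A"
  shows "inner (A *v u) v = inner u (A *v v)"
proof -
  have "inner u (A *v v) = inner (transpose A *v u) v"
    by (simp flip: dot_lmul_matrix)
  then show ?thesis
    using assms by simp
qed

lemma inner_self_adjoint_add_scaleR:
  fixes L :: "'a::real_inner \<Rightarrow> 'a"
  assumes "linear L" and "\<And>u v. inner (L u) v = inner u (L v)"
  shows "inner (L (h + s *\<^sub>R z)) (h + s *\<^sub>R z) =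
         inner (L h) h + 2 * s * inner (L h) z + s\<^sup>2 * inner (L z) z"
proof -
  have "inner (L z) h = inner (L h) z"
    using assms(2) by (simp add: inner_commute)
  then show ?thesis
    using assms(1)
    by (simp add: linear_add linear_scale inner_add_left inner_add_right algebra_simps power2_eq_square)
qed

definition quadratic_remainder :: "('a::real_inner \<Rightarrow> real) \<Rightarrow> 'a \<Rightarrow> 'a \<Rightarrow> ('a \<Rightarrow> 'a) \<Rightarrow> 'a \<Rightarrow> real"
  where "quadratic_remainder w x0 p0 L u =
    w u - (w x0 + inner p0 (u - x0) + 1/2 * inner (L (u - x0)) (u - x0))"

lemma quadratic_remainder_at_base [simp]: "quadratic_remainder w x0 p0 L x0 = 0"
  by (simp add: quadratic_remainder_def)

lemma subgradient_quadratic_model_ineq: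
  fixes w :: "'a::real_inner \<Rightarrow> real" and L :: "'a \<Rightarrow> 'a"
  assumes "linear L" and "\<And>u v. inner (L u) v = inner u (L v)"
    and "p \<in> subdifferential D w x" and "x + s *\<^sub>R z \<in> D"
  shows "s * inner (p - p0 - L (x - x0)) z
           \<le> s\<^sup>2 / 2 * inner (L z) z
              + quadratic_remainder w x0 p0 L (x + s *\<^sub>R z) - quadratic_remainder w x0 p0 L x"
proof -
  have "w x + inner p (x + s *\<^sub>R z - x) \<le> w (x + s *\<^sub>R z)"
    using assms(3,4) unfolding subdifferential_def by blast
  moreover have "x + s *\<^sub>R z - x0 = (x - x0) + s *\<^sub>R z"
    by simp
  ultimately show ?thesis
    unfolding quadratic_remainder_def
    by (simp only: inner_self_adjoint_add_scaleR[OF assms(1,2)])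
      (simp add: inner_diff_left inner_add_right algebra_simps)
qed

lemma subgradient_deviation_le:
  fixes w :: "'a::real_inner \<Rightarrow> real" and L :: "'a \<Rightarrow> 'a"
  assumes "linear L" and "\<And>u v. inner (L u) v = inner u (L v)"
    and "0 \<le> K" and L_bound: "\<And>z. norm (L z) \<le> norm z * K"
    and ball_D: "ball x0 \<rho> \<subseteq> D"
    and "0 \<le> \<epsilon>"
    and remainder_le: "\<And>u. u \<in> ball x0 \<rho> \<Longrightarrow>
      \<bar>quadratic_remainder w x0 p0 L u\<bar> \<le> \<epsilon> * (norm (u - x0))\<^sup>2"
    and "0 < t" and "x \<noteq> x0" and x_near: "(1 + t) * norm (x - x0) < \<rho>"
    and p: "p \<in> subdifferential D w x"
  shows "norm (p - p0 - L (x - x0)) \<le> (t * K / 2 + \<epsilon> * ((1 + t)\<^sup>2 + 1) / t) * norm (x - x0)"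
proof -
  define R where "R = quadratic_remainder w x0 p0 L"
  define r where "r = norm (x - x0)"
  define v where "v = p - p0 - L (x - x0)"
  have r: "0 < r" "r \<le> (1 + t) * r"
    using \<open>0 < t\<close> \<open>x \<noteq> x0\<close> by (simp_all add: r_def)
  show ?thesis
  proof (cases "v = 0")
    case True
    then show ?thesis
      using \<open>0 \<le> K\<close> \<open>0 \<le> \<epsilon>\<close> \<open>0 < t\<close> by (simp flip: v_def)
  next
    case False
    define z where "z = v /\<^sub>R norm v"
    define s where "s = t * r"
    have "norm z = 1" and vz: "inner v z = norm v"
      using False by (simp_all add: z_def inner_scaleR_right dot_square_norm power2_eq_square)
    have s: "0 < s"
      using \<open>0 < t\<close> r by (simp add: s_def)
    have y_near: "norm (x + s *\<^sub>R z - x0) \<le> (1 + t) * r"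
      using norm_triangle_ineq[of "x - x0" "s *\<^sub>R z"] \<open>norm z = 1\<close> s
      by (simp add: s_def r_def algebra_simps)
    then have y_ball: "x + s *\<^sub>R z \<in> ball x0 \<rho>"
      using x_near by (simp add: r_def dist_norm norm_minus_commute)
    have Ry: "R (x + s *\<^sub>R z) \<le> \<epsilon> * ((1 + t) * r)\<^sup>2"
    proof -
      have "R (x + s *\<^sub>R z) \<le> \<epsilon> * (norm (x + s *\<^sub>R z - x0))\<^sup>2"
        using remainder_le[OF y_ball] by (simp add: R_def)
      also have "\<dots> \<le> \<epsilon> * ((1 + t) * r)\<^sup>2"
        using y_near \<open>0 \<le> \<epsilon>\<close> by (intro mult_left_mono power_mono) auto
      finally show ?thesis .
    qed
    have "r < \<rho>"
      using r x_near unfolding r_def by linarith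
    then have "x \<in> ball x0 \<rho>"
      by (simp add: r_def dist_norm norm_minus_commute)
    then have Rx: "- R x \<le> \<epsilon> * r\<^sup>2"
      using remainder_le[of x] by (simp add: R_def r_def)
    have Lz: "inner (L z) z \<le> K"
      using Cauchy_Schwarz_ineq2[of "L z" z] L_bound[of z] \<open>norm z = 1\<close> by simp
    have "s * norm v \<le> s\<^sup>2 / 2 * inner (L z) z + R (x + s *\<^sub>R z) - R x"
      using subgradient_quadratic_model_ineq[where ?x0.0 = x0 and ?p0.0 = p0,
          OF assms(1,2) p y_ball[THEN subsetD[OF ball_D]]]
      by (simp add: R_def flip: v_def vz)
    also have "\<dots> \<le> s\<^sup>2 / 2 * K + \<epsilon> * ((1 + t) * r)\<^sup>2 + \<epsilon> * r\<^sup>2"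
      using mult_left_mono[OF Lz, of "s\<^sup>2 / 2"] Ry Rx by simp
    also have "\<dots> = s * ((t * K / 2 + \<epsilon> * ((1 + t)\<^sup>2 + 1) / t) * r)"
      using \<open>0 < t\<close> by (simp add: s_def power2_eq_square field_simps)
    finally show ?thesis
      using s by (simp add: v_def r_def)
  qed
qed

lemma subdifferential_first_order_approx:
  fixes w :: "'a::real_inner \<Rightarrow> real" and L :: "'a \<Rightarrow> 'a"
  assumes "open D" and "x0 \<in> D"
    and "bounded_linear L" and "\<And>u v. inner (L u) v = inner u (L v)"
    and remainder: "quadratic_remainder w x0 p0 L \<in> o[at x0](\<lambda>x. (norm (x - x0))\<^sup>2)"
    and "0 < \<eta>"
  shows "\<forall>\<^sub>F x in at x0. \<forall>p\<in>subdifferential D w x.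
           norm (p - p0 - L (x - x0)) \<le> \<eta> * norm (x - x0)"
proof -
  define R where "R = quadratic_remainder w x0 p0 L"
  obtain K where K: "0 < K" "\<And>z. norm (L z) \<le> norm z * K"
    using bounded_linear.pos_bounded[OF assms(3)] by blast
  define t where "t = \<eta> / (K + 1)"
  define c where "c = (1 + t)\<^sup>2 + 1"
  define \<epsilon> where "\<epsilon> = \<eta> * t / (2 * c)"
  have t: "0 < t" "t * K \<le> \<eta>"
    using K \<open>0 < \<eta>\<close> by (simp_all add: t_def field_simps)
  have "0 < c"
    by (simp add: c_def add_nonneg_pos)
  then have \<epsilon>: "0 < \<epsilon>" "\<epsilon> * c / t = \<eta> / 2"
    using t \<open>0 < \<eta>\<close> by (simp_all add: \<epsilon>_def)
  have "\<forall>\<^sub>F u in at x0. norm (R u) \<le> \<epsilon> * norm ((norm (u - x0))\<^sup>2)"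
    using landau_o.smallD[OF remainder \<epsilon>(1)] unfolding R_def .
  then obtain \<rho>\<^sub>1 where "0 < \<rho>\<^sub>1"
    and \<rho>\<^sub>1: "\<And>u. u \<noteq> x0 \<Longrightarrow> dist u x0 < \<rho>\<^sub>1 \<Longrightarrow> \<bar>R u\<bar> \<le> \<epsilon> * (norm (u - x0))\<^sup>2"
    unfolding eventually_at by auto
  obtain \<rho>\<^sub>2 where "0 < \<rho>\<^sub>2" and \<rho>\<^sub>2: "ball x0 \<rho>\<^sub>2 \<subseteq> D"
    using assms(1,2) open_contains_ball by blast
  define \<rho> where "\<rho> = min \<rho>\<^sub>1 \<rho>\<^sub>2"
  have ball_D: "ball x0 \<rho> \<subseteq> D"
    using \<rho>\<^sub>2 by (auto simp: \<rho>_def)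
  have R_small: "\<bar>R u\<bar> \<le> \<epsilon> * (norm (u - x0))\<^sup>2" if "u \<in> ball x0 \<rho>" for u
    using \<rho>\<^sub>1[of u] that by (cases "u = x0") (auto simp: R_def \<rho>_def dist_commute)
  have "0 < \<rho> / (1 + t)"
    using \<open>0 < \<rho>\<^sub>1\<close> \<open>0 < \<rho>\<^sub>2\<close> t(1) by (simp add: \<rho>_def)
  then have "\<forall>\<^sub>F x in at x0. x \<in> ball x0 (\<rho> / (1 + t)) \<and> x \<noteq> x0"
    using eventually_at_ball'[of _ x0 UNIV] by simp
  then show ?thesis
  proof (rule eventually_mono, intro ballI)
    fix x p
    assume x: "x \<in> ball x0 (\<rho> / (1 + t)) \<and> x \<noteq> x0"
      and p: "p \<in> subdifferential D w x"
    have "(1 + t) * norm (x - x0) < \<rho>"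
      using x t(1) by (simp add: dist_norm norm_minus_commute field_simps)
    then have "norm (p - p0 - L (x - x0))
                 \<le> (t * K / 2 + \<epsilon> * ((1 + t)\<^sup>2 + 1) / t) * norm (x - x0)"
      using subgradient_deviation_le[OF bounded_linear.linear[OF assms(3)] assms(4)
          less_imp_le[OF K(1)] K(2) ball_D less_imp_le[OF \<epsilon>(1)] R_small[unfolded R_def] t(1)]
        x p by blast
    also have "\<dots> \<le> \<eta> * norm (x - x0)"
      using t(2) \<epsilon>(2) unfolding c_def by (intro mult_right_mono) auto
    finally show "norm (p - p0 - L (x - x0)) \<le> \<eta> * norm (x - x0)" .
  qed
qed

lemma has_derivative_compose_uniform_approx:
  fixes S :: "'a::real_normed_vector \<Rightarrow> 'b::real_normed_vector set"
    and L :: "'a \<Rightarrow> 'b" and f :: "'b \<Rightarrow> 'c::real_normed_vector"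
  assumes "bounded_linear L" and "(f has_derivative f') (at p0)"
    and approx: "\<And>\<eta>. 0 < \<eta> \<Longrightarrow>
      \<forall>\<^sub>F x in at x0. \<forall>p\<in>S x. norm (p - p0 - L (x - x0)) \<le> \<eta> * norm (x - x0)"
    and "0 < e"
  shows "\<forall>\<^sub>F x in at x0. \<forall>p\<in>S x. norm (f p - f p0 - f' (L (x - x0))) \<le> e * norm (x - x0)"
proof -
  have "bounded_linear f'"
    using assms(2) by (rule has_derivative_bounded_linear)
  obtain K where K: "0 < K" "\<And>z. norm (L z) \<le> norm z * K"
    using bounded_linear.pos_bounded[OF assms(1)] by blast
  obtain M where M: "0 < M" "\<And>z. norm (f' z) \<le> norm z * M"
    using bounded_linear.pos_bounded[OF \<open>bounded_linear f'\<close>] by blast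
  define \<eta>\<^sub>1 where "\<eta>\<^sub>1 = e / (2 * (K + 1))"
  define \<eta>\<^sub>2 where "\<eta>\<^sub>2 = min 1 (e / (2 * M))"
  have \<eta>\<^sub>1: "0 < \<eta>\<^sub>1" "\<eta>\<^sub>1 * (K + 1) = e / 2"
    using K(1) assms(4) by (simp_all add: \<eta>\<^sub>1_def field_simps)
  have \<eta>\<^sub>2: "0 < \<eta>\<^sub>2" "\<eta>\<^sub>2 \<le> 1" "M * \<eta>\<^sub>2 \<le> e / 2"
    using M(1) assms(4) by (auto simp: \<eta>\<^sub>2_def min_def field_simps)
  obtain d where "0 < d" and d: "\<And>q. norm (q - p0) < d \<Longrightarrow>
      norm (f q - f p0 - f' (q - p0)) \<le> \<eta>\<^sub>1 * norm (q - p0)"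
    using assms(2) \<eta>\<^sub>1(1) unfolding has_derivative_at_alt by blast
  have "0 < d / (K + 1)"
    using \<open>0 < d\<close> K(1) by simp
  then have "\<forall>\<^sub>F x in at x0. x \<in> ball x0 (d / (K + 1))"
    using eventually_at_ball[of _ x0 UNIV] by simp
  with approx[OF \<eta>\<^sub>2(1)] show ?thesis
  proof (rule eventually_elim2, intro ballI)
    fix x p
    assume approx_x: "\<forall>p\<in>S x. norm (p - p0 - L (x - x0)) \<le> \<eta>\<^sub>2 * norm (x - x0)"
      and x: "x \<in> ball x0 (d / (K + 1))" and "p \<in> S x"
    define r where "r = norm (x - x0)"
    define v where "v = p - p0 - L (x - x0)"
    have v: "norm v \<le> \<eta>\<^sub>2 * r"
      using approx_x \<open>p \<in> S x\<close> by (simp add: v_def r_def)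
    also have "\<dots> \<le> r"
      using mult_right_mono[OF \<eta>\<^sub>2(2), of r] by (simp add: r_def)
    finally have "norm (p - p0) \<le> r + r * K"
      using norm_triangle_ineq[of v "L (x - x0)"] K(2)[of "x - x0"] by (simp add: v_def r_def)
    then have p_near: "norm (p - p0) \<le> (K + 1) * r"
      by (simp add: algebra_simps)
    moreover have "(K + 1) * r < d"
      using x K(1) by (simp add: r_def dist_norm norm_minus_commute field_simps)
    ultimately have "norm (f p - f p0 - f' (p - p0)) \<le> \<eta>\<^sub>1 * ((K + 1) * r)"
      using d[of p] \<eta>\<^sub>1(1) by (smt (verit) mult_left_mono)
    moreover have "norm (f' v) \<le> M * (\<eta>\<^sub>2 * r)"
      using M(2)[of v] v M(1) by (smt (verit) mult.commute mult_left_mono)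
    moreover have "f p - f p0 - f' (L (x - x0)) = (f p - f p0 - f' (p - p0)) + f' v"
      using linear_diff[OF bounded_linear.linear[OF \<open>bounded_linear f'\<close>]]
      by (simp add: v_def)
    ultimately have "norm (f p - f p0 - f' (L (x - x0))) \<le> (\<eta>\<^sub>1 * (K + 1)) * r + (M * \<eta>\<^sub>2) * r"
      using norm_triangle_ineq[of "f p - f p0 - f' (p - p0)" "f' v"] by (simp add: algebra_simps)
    also have "\<dots> \<le> e / 2 * r + e / 2 * r"
      using \<eta>\<^sub>1(2) \<eta>\<^sub>2(3) by (intro add_mono mult_right_mono) (auto simp: r_def)
    finally show "norm (f p - f p0 - f' (L (x - x0))) \<le> e * norm (x - x0)"
      by (simp add: r_def)
  qed
qed

theorem lemma8:
  fixes D :: "(real ^ 'n) set" and w :: "real ^ 'n \<Rightarrow> real"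
    and x0 p0 :: "real ^ 'n" and A :: "real ^ 'n ^ 'n"
    and f :: "real ^ 'n \<Rightarrow> real" and gradf :: "real ^ 'n \<Rightarrow> real ^ 'n"
    and U :: "(real ^ 'n) set"
  assumes "open D" and "convex D" and "convex_on D w" and "x0 \<in> D"
    and "transpose A = A"
    and "(\<lambda>x. w x - (w x0 + inner p0 (x - x0) + (1/2) * inner (A *v (x - x0)) (x - x0)))
           \<in> o[at x0](\<lambda>x. (norm (x - x0))\<^sup>2)"
    and "open U" and "p0 \<in> U"
    and "\<And>p. p \<in> U \<Longrightarrow> (f has_derivative (\<lambda>h. inner (gradf p) h)) (at p)"
    and "continuous_on U gradf"
  shows "\<forall>e>0. \<exists>d>0. \<forall>x\<in>D. 0 < norm (x - x0) \<and> norm (x - x0) < d \<longrightarrow>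
           (\<forall>p\<in>subdifferential D w x.
              \<bar>f p - f p0 - inner (gradf p0) (A *v (x - x0))\<bar> \<le> e * norm (x - x0))"
proof (intro allI impI)
  fix e :: real
  assume "0 < e"
  have self_adjoint: "\<And>u v. inner (A *v u) v = inner u (A *v v)"
    using assms(5) by (rule inner_matrix_vector_mul_symmetric)
  have "\<And>\<eta>. 0 < \<eta> \<Longrightarrow> \<forall>\<^sub>F x in at x0. \<forall>p\<in>subdifferential D w x.
      norm (p - p0 - A *v (x - x0)) \<le> \<eta> * norm (x - x0)"
    using subdifferential_first_order_approx[OF assms(1,4) matrix_vector_mul_bounded_linear
        self_adjoint] assms(6) by (simp add: quadratic_remainder_def [abs_def])
  then have "\<forall>\<^sub>F x in at x0. \<forall>p\<in>subdifferential D w x.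
      norm (f p - f p0 - inner (gradf p0) (A *v (x - x0))) \<le> e * norm (x - x0)"
    using has_derivative_compose_uniform_approx[OF matrix_vector_mul_bounded_linear
        assms(9)[OF assms(8)] _ \<open>0 < e\<close>] by blast
  then obtain d where "0 < d" and "\<forall>x. x \<noteq> x0 \<and> dist x x0 < d \<longrightarrow> (\<forall>p\<in>subdifferential D w x.
      \<bar>f p - f p0 - inner (gradf p0) (A *v (x - x0))\<bar> \<le> e * norm (x - x0))"
    unfolding eventually_at by auto
  then show "\<exists>d>0. \<forall>x\<in>D. 0 < norm (x - x0) \<and> norm (x - x0) < d \<longrightarrow>
      (\<forall>p\<in>subdifferential D w x.
        \<bar>f p - f p0 - inner (gradf p0) (A *v (x - x0))\<bar> \<le> e * norm (x - x0))"
    by (auto simp: dist_norm)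
qed

end
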